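(* Let $G$ and $H$ be finite simple connected graphs and let $L$ be a non-empty proper subset of $V(G)$. Let $T$ be a non-empty cutset of $G\circ_L H$, and write $T=T_0\cup\bigcup_{v\in L}T_v$ with $T_0\subseteq V(G)$ and $T_v\subseteq V(H_v)$ for all $v\in L$. Then: (1) $\emptyset\neq T_0\subsetneq V(G)$. (2) If $v\in L\setminus T_0$, then $T_v=\emptyset$. (3) If $v\in T_0$ (and $v\in L$), then either $T_v=\emptyset$ or $T_v\in\mathscr{C}(H_v)$. (4) If $v\in L\cap T_0$ and $N_G(v)\subseteq T_0$, then $T_v\neq\emptyset$. (5) With $N:=\{v\in L : T_v\neq\emptyset\}$, $$\omega\big((G\circ_L H)\setminus T\big)=\omega(G\setminus T_0)+\sum_{v\in N}\omega(H_v\setminus T_v)+|T_0\cap L|-|N|.$$ (6) Every simplicial vertex of $G$ lying in $T_0$ belongs to $L$. (7) If $T_0\cap L=\emptyset$, then $T=T_0\in\mathscr{C}(G)$ and $T_0$ contains no simplicial vertex of $G$.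
   Context: All graphs are finite and simple. For a graph $\Gamma$ and $A\subseteq V(\Gamma)$, $\Gamma\setminus A$ is the induced subgraph on $V(\Gamma)\setminus A$ and $\omega(\Gamma\setminus A)$ is its number of connected components. A subset $T\subseteq V(\Gamma)$ is a cutset if $T=\emptyset$ or, for every $v\in T$, $\omega(\Gamma\setminus (T\setminus\{v\}))<\omega(\Gamma\setminus T)$; $\mathscr{C}(\Gamma)$ is the set of cutsets. $N_G(v)$ is the set of neighbours of $v$ in $G$. A vertex is simplicial if it belongs to exactly one maximal clique. For a non-empty $L\subseteq V(G)$, $G\circ_L H$ is the graph obtained from $G$ by taking, for each $v\in L$, a disjoint copy $H_v$ of $H$ and joining $v$ to every vertex of $H_v$. *)

theory Defs
  imports Main
begin

text \<open>A graph is a pair (vertex set, edge set); edges are ordered pairs, stored symmetrically.\<close>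
type_synonym 'a graph = "'a set \<times> ('a \<times> 'a) set"

definition verts :: "'a graph \<Rightarrow> 'a set" where "verts G = fst G"
definition edges :: "'a graph \<Rightarrow> ('a \<times> 'a) set" where "edges G = snd G"

definition simple_graph :: "'a graph \<Rightarrow> bool" where
  "simple_graph G \<longleftrightarrow> finite (verts G) \<and> edges G \<subseteq> verts G \<times> verts G
     \<and> sym (edges G) \<and> irrefl (edges G)"

definition delete :: "'a graph \<Rightarrow> 'a set \<Rightarrow> 'a graph" where
  "delete G A = (verts G - A, edges G \<inter> ((verts G - A) \<times> (verts G - A)))"

definition components :: "'a graph \<Rightarrow> 'a set set" where
  "components G = {{y \<in> verts G. (x, y) \<in> (edges G)\<^sup>*} | x. x \<in> verts G}"

definition omega :: "'a graph \<Rightarrow> nat" where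
  "omega G = card (components G)"

definition connected_graph :: "'a graph \<Rightarrow> bool" where
  "connected_graph G \<longleftrightarrow> verts G \<noteq> {} \<and> omega G = 1"

definition is_cutset :: "'a graph \<Rightarrow> 'a set \<Rightarrow> bool" where
  "is_cutset G T \<longleftrightarrow> T \<subseteq> verts G \<and>
     (T = {} \<or> (\<forall>v\<in>T. omega (delete G (T - {v})) < omega (delete G T)))"

definition neighbours :: "'a graph \<Rightarrow> 'a \<Rightarrow> 'a set" where
  "neighbours G v = {u. (v, u) \<in> edges G}"

definition is_clique :: "'a graph \<Rightarrow> 'a set \<Rightarrow> bool" where
  "is_clique G C \<longleftrightarrow> C \<subseteq> verts G \<and> (\<forall>x\<in>C. \<forall>y\<in>C. x \<noteq> y \<longrightarrow> (x, y) \<in> edges G)"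

definition is_max_clique :: "'a graph \<Rightarrow> 'a set \<Rightarrow> bool" where
  "is_max_clique G C \<longleftrightarrow> is_clique G C \<and> (\<forall>D. is_clique G D \<and> C \<subseteq> D \<longrightarrow> D = C)"

definition simplicial :: "'a graph \<Rightarrow> 'a \<Rightarrow> bool" where
  "simplicial G v \<longleftrightarrow> v \<in> verts G \<and> (\<exists>!C. is_max_clique G C \<and> v \<in> C)"

text \<open>The copy H_v of H attached at v, with vertices Inr (v, w).\<close>
definition hcopy :: "'a \<Rightarrow> 'b graph \<Rightarrow> ('a + 'a \<times> 'b) graph" where
  "hcopy v H = ((\<lambda>w. Inr (v, w)) ` verts H,
                (\<lambda>(w, w'). (Inr (v, w), Inr (v, w'))) ` edges H)"

definition gcopy :: "'a graph \<Rightarrow> ('a + 'a \<times> 'b) graph" where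
  "gcopy G = (Inl ` verts G, (\<lambda>(u, u'). (Inl u, Inl u')) ` edges G)"

definition corona :: "'a graph \<Rightarrow> 'a set \<Rightarrow> 'b graph \<Rightarrow> ('a + 'a \<times> 'b) graph" where
  "corona G L H =
    (verts (gcopy G) \<union> (\<Union>v\<in>L. verts (hcopy v H)),
     edges (gcopy G) \<union> (\<Union>v\<in>L. edges (hcopy v H))
       \<union> {(Inl v, Inr (v, w)) | v w. v \<in> L \<and> w \<in> verts H}
       \<union> {(Inr (v, w), Inl v) | v w. v \<in> L \<and> w \<in> verts H})"

end

theory Submission
  imports Defs
begin

text \<open>
  Deleting a set \<open>S\<close> from \<open>G \<circ>\<^sub>L H\<close> leaves, for every component \<open>C\<close> of \<open>G \<setminus> S\<^sub>0\<close>, one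
  component consisting of \<open>C\<close> and the surviving vertices of the copies \<open>H\<^sub>v\<close> hanging at
  \<open>v \<in> C \<inter> L\<close>, and for every \<open>v \<in> L \<inter> S\<^sub>0\<close> the components of \<open>H\<^sub>v \<setminus> S\<^sub>v\<close>. So
  \<open>\<omega>((G \<circ>\<^sub>L H) \<setminus> S)\<close> is \<open>\<omega>(G \<setminus> S\<^sub>0)\<close> plus the sum of \<open>\<omega>(H\<^sub>v \<setminus> S\<^sub>v)\<close> over
  \<open>v \<in> L \<inter> S\<^sub>0\<close>, where \<open>S\<^sub>0\<close> and \<open>S\<^sub>v\<close> are \<open>base_part G S\<close> and \<open>fibre H S v\<close> below.
  Comparing this formula for \<open>T\<close> and for \<open>T\<close> minus one vertex turns the cutset condition
  into local inequalities: putting back a vertex of \<open>H\<^sub>v\<close> only changes the summand of \<open>v\<close>,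
  which is present only if \<open>v \<in> T\<^sub>0\<close>; putting back \<open>u \<in> T\<^sub>0\<close> re-adds \<open>u\<close> to \<open>G \<setminus> T\<^sub>0\<close> and,
  for \<open>u \<in> L\<close>, removes the summand of \<open>u\<close>. The items then follow by counting: a re-added
  vertex whose neighbours all lie in \<open>T\<^sub>0\<close> is a new component, a re-added simplicial vertex
  merges at most one component, and an untouched copy \<open>H\<^sub>v\<close> contributes exactly one.
\<close>

section \<open>Components\<close>

lemma verts_delete [simp]: "verts (delete G A) = verts G - A"
  by (simp add: delete_def verts_def)

lemma edges_delete [simp]: "edges (delete G A) = edges G \<inter> (verts G - A) \<times> (verts G - A)"
  by (simp add: delete_def verts_def edges_def)

lemma simple_graph_delete: "simple_graph G \<Longrightarrow> simple_graph (delete G A)"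
  by (auto simp: simple_graph_def sym_def irrefl_def)

lemma delete_empty: "simple_graph G \<Longrightarrow> delete G {} = G"
  by (cases G) (auto simp: delete_def simple_graph_def verts_def edges_def)

lemma simple_graph_edgeD:
  "simple_graph G \<Longrightarrow> (x, y) \<in> edges G \<Longrightarrow> x \<in> verts G \<and> y \<in> verts G \<and> (y, x) \<in> edges G"
  by (auto simp: simple_graph_def dest: symD)

lemma components_subset: "C \<in> components G \<Longrightarrow> C \<subseteq> verts G"
  by (auto simp: components_def)

lemma components_nonempty: "C \<in> components G \<Longrightarrow> C \<noteq> {}"
  by (auto simp: components_def)

lemma Union_components: "\<Union>(components G) = verts G"
  by (auto simp: components_def)

lemma finite_components: "simple_graph G \<Longrightarrow> finite (components G)"
  by (rule finite_subset[of _ "Pow (verts G)"])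
    (auto simp: simple_graph_def dest: components_subset)

lemma omega_delete_verts: "omega (delete G (verts G)) = 0"
  by (simp add: omega_def components_def)

lemma rtrancl_edges_sym:
  "simple_graph G \<Longrightarrow> (x, y) \<in> (edges G)\<^sup>* \<Longrightarrow> (y, x) \<in> (edges G)\<^sup>*"
  unfolding simple_graph_def by (blast dest: sym_rtrancl symD)

lemma component_eq_reachable:
  assumes G: "simple_graph G" and "C \<in> components G" "x \<in> C"
  shows "C = {y \<in> verts G. (x, y) \<in> (edges G)\<^sup>*}"
proof -
  obtain r where C: "C = {y \<in> verts G. (r, y) \<in> (edges G)\<^sup>*}"
    using assms(2) by (auto simp: components_def)
  then have "(r, x) \<in> (edges G)\<^sup>*" "(x, r) \<in> (edges G)\<^sup>*"
    using \<open>x \<in> C\<close> rtrancl_edges_sym[OF G] by auto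
  then have "(r, y) \<in> (edges G)\<^sup>* \<longleftrightarrow> (x, y) \<in> (edges G)\<^sup>*" for y
    by (meson rtrancl_trans)
  then show ?thesis
    unfolding C by blast
qed

lemma component_connected:
  assumes "simple_graph G" "C \<in> components G" "x \<in> C" "y \<in> C"
  shows "(x, y) \<in> (edges G)\<^sup>*"
  using assms(4) component_eq_reachable[OF assms(1-3)] by simp

lemma component_closed:
  assumes G: "simple_graph G" and "C \<in> components G" "x \<in> C" "(x, y) \<in> edges G"
  shows "y \<in> C"
proof -
  have "(x, y) \<in> (edges G)\<^sup>*" "y \<in> verts G"
    using simple_graph_edgeD[OF G \<open>(x, y) \<in> edges G\<close>] \<open>(x, y) \<in> edges G\<close> by auto
  then show ?thesis
    using component_eq_reachable[OF assms(1-3)] by blast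
qed

lemma components_disjoint:
  assumes "simple_graph G" "C \<in> components G" "C' \<in> components G" "x \<in> C" "x \<in> C'"
  shows "C = C'"
  using component_eq_reachable[OF assms(1,2,4)] component_eq_reachable[OF assms(1,3,5)] by simp

lemma components_eqI:
  assumes G: "simple_graph G" and cover: "\<Union>P = verts G" and nonempty: "\<And>B. B \<in> P \<Longrightarrow> B \<noteq> {}"
    and rooted: "\<And>B. B \<in> P \<Longrightarrow> \<exists>r. \<forall>y\<in>B. (r, y) \<in> (edges G)\<^sup>*"
    and closed: "\<And>B x y. B \<in> P \<Longrightarrow> x \<in> B \<Longrightarrow> (x, y) \<in> edges G \<Longrightarrow> y \<in> B"
  shows "components G = P"
proof -
  have reachable: "{y \<in> verts G. (x, y) \<in> (edges G)\<^sup>*} = B" if "B \<in> P" "x \<in> B" for B x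
  proof
    show "{y \<in> verts G. (x, y) \<in> (edges G)\<^sup>*} \<subseteq> B"
    proof clarify
      fix y assume "(x, y) \<in> (edges G)\<^sup>*"
      then show "y \<in> B"
        by induction (use that closed in blast)+
    qed
    obtain r where "\<forall>y\<in>B. (r, y) \<in> (edges G)\<^sup>*"
      using rooted \<open>B \<in> P\<close> by blast
    then show "B \<subseteq> {y \<in> verts G. (x, y) \<in> (edges G)\<^sup>*}"
      using that cover rtrancl_edges_sym[OF G] by (blast intro: rtrancl_trans)
  qed
  show ?thesis
  proof
    show "components G \<subseteq> P"
    proof
      fix C assume "C \<in> components G"
      then obtain x where "x \<in> verts G" "C = {y \<in> verts G. (x, y) \<in> (edges G)\<^sup>*}"
        by (auto simp: components_def)
      moreover obtain B where "B \<in> P" "x \<in> B"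
        using cover \<open>x \<in> verts G\<close> by blast
      ultimately show "C \<in> P"
        using reachable by simp
    qed
    show "P \<subseteq> components G"
    proof
      fix B assume "B \<in> P"
      then obtain x where "x \<in> B"
        using nonempty by blast
      then have "x \<in> verts G" "B = {y \<in> verts G. (x, y) \<in> (edges G)\<^sup>*}"
        using reachable \<open>B \<in> P\<close> cover by auto
      then show "B \<in> components G"
        by (auto simp: components_def)
    qed
  qed
qed

lemma rtrancl_map:
  assumes "(a, b) \<in> R\<^sup>*" and "\<And>p q. (p, q) \<in> R \<Longrightarrow> (f p, f q) \<in> R'"
  shows "(f a, f b) \<in> R'\<^sup>*"
  using assms(1) by induction (use assms(2) in \<open>auto intro: rtrancl_into_rtrancl\<close>)

section \<open>Re-adding a deleted vertex\<close>

lemma edges_delete_antimono: "A' \<subseteq> A \<Longrightarrow> edges (delete G A) \<subseteq> edges (delete G A')"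
  by auto

definition touching_components :: "'a graph \<Rightarrow> 'a set \<Rightarrow> 'a \<Rightarrow> 'a set set" where
  "touching_components G A v = {C \<in> components (delete G A). C \<inter> neighbours G v \<noteq> {}}"

lemma touching_component_reachable:
  assumes G: "simple_graph G" and "v \<in> A" "v \<in> verts G"
    and C: "C \<in> touching_components G A v" and "y \<in> C"
  shows "(v, y) \<in> (edges (delete G (A - {v})))\<^sup>*"
proof -
  obtain a where a: "a \<in> C" "a \<in> neighbours G v"
    using C by (auto simp: touching_components_def)
  have comp: "C \<in> components (delete G A)"
    using C by (simp add: touching_components_def)
  have "(v, a) \<in> edges (delete G (A - {v}))"
    using a components_subset[OF comp] \<open>v \<in> A\<close> \<open>v \<in> verts G\<close> by (auto simp: neighbours_def)
  moreover have "(a, y) \<in> (edges (delete G A))\<^sup>*"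
    using component_connected[OF simple_graph_delete[OF G] comp a(1) \<open>y \<in> C\<close>] .
  then have "(a, y) \<in> (edges (delete G (A - {v})))\<^sup>*"
    using rtrancl_mono[OF edges_delete_antimono[of "A - {v}" A G]] by blast
  ultimately show ?thesis
    by (rule converse_rtrancl_into_rtrancl)
qed

lemma neighbour_in_touching_component:
  assumes "y \<in> neighbours G v" "y \<in> verts G" "y \<notin> A"
  shows "\<exists>C\<in>touching_components G A v. y \<in> C"
proof -
  obtain C where "C \<in> components (delete G A)" "y \<in> C"
    using Union_components[of "delete G A"] assms(2,3) by auto
  with assms(1) show ?thesis
    by (auto simp: touching_components_def)
qed

lemma components_delete_Diff_singleton:
  assumes G: "simple_graph G" and "v \<in> A" "v \<in> verts G"
  defines "M \<equiv> touching_components G A v"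
  shows "components (delete G (A - {v})) = insert (insert v (\<Union>M)) (components (delete G A) - M)"
proof (rule components_eqI)
  let ?GA = "delete G A" and ?GV = "delete G (A - {v})"
  have GA: "simple_graph ?GA"
    using G by (rule simple_graph_delete)
  have v_notin: "v \<notin> C" if "C \<in> components ?GA" for C
    using components_subset[OF that] \<open>v \<in> A\<close> by auto
  show "simple_graph ?GV"
    using G by (rule simple_graph_delete)
  show "\<Union>(insert (insert v (\<Union>M)) (components ?GA - M)) = verts ?GV"
    using Union_components[of ?GA] \<open>v \<in> A\<close> \<open>v \<in> verts G\<close>
    by (auto simp: M_def touching_components_def)
  show "B \<noteq> {}" if "B \<in> insert (insert v (\<Union>M)) (components ?GA - M)" for B
    using that components_nonempty by blast
  show "\<exists>r. \<forall>y\<in>B. (r, y) \<in> (edges ?GV)\<^sup>*"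
    if "B \<in> insert (insert v (\<Union>M)) (components ?GA - M)" for B
  proof (cases "B \<in> components ?GA - M")
    case True
    then obtain r where "r \<in> B"
      using components_nonempty by blast
    then have "(r, y) \<in> (edges ?GA)\<^sup>*" if "y \<in> B" for y
      using component_connected[OF GA] True that by blast
    then show ?thesis
      using rtrancl_mono[OF edges_delete_antimono[of "A - {v}" A G]] by blast
  next
    case False
    then show ?thesis
      using that touching_component_reachable[OF assms(1-3)] unfolding M_def by blast
  qed
  show "y \<in> B" if "B \<in> insert (insert v (\<Union>M)) (components ?GA - M)" "x \<in> B" "(x, y) \<in> edges ?GV"
    for B x y
  proof -
    have xy: "(x, y) \<in> edges G" "y \<in> verts G" "x \<notin> A - {v}" "y \<notin> A - {v}"
      using that(3) by auto
    have "y \<in> C" if "C \<in> components ?GA" "x \<in> C" "y \<noteq> v" for C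
      using component_closed[OF GA that(1,2)] components_subset[OF that(1)] that xy by auto
    moreover have "x \<in> neighbours G y" "y \<in> neighbours G x"
      using xy(1) G by (auto simp: neighbours_def dest: simple_graph_edgeD)
    ultimately show "y \<in> B"
      using that(1,2) xy neighbour_in_touching_component[of y G v A] v_notin
      by (auto simp: M_def touching_components_def)
  qed
qed

lemma omega_delete_Diff_singleton:
  assumes G: "simple_graph G" and "v \<in> A" "v \<in> verts G"
  shows "omega (delete G (A - {v})) + card (touching_components G A v) = Suc (omega (delete G A))"
proof -
  let ?C = "components (delete G A)" and ?M = "touching_components G A v"
  have fin: "finite ?C"
    using G by (simp add: finite_components simple_graph_delete)
  have M: "?M \<subseteq> ?C"
    by (auto simp: touching_components_def)
  have "v \<notin> C" if "C \<in> ?C" for C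
    using components_subset[OF that] \<open>v \<in> A\<close> by auto
  then have new_block: "insert v (\<Union>?M) \<notin> ?C - ?M"
    by blast
  have "omega (delete G (A - {v})) = Suc (card (?C - ?M))"
    unfolding omega_def components_delete_Diff_singleton[OF assms]
    by (rule card_insert_disjoint[OF finite_Diff[OF fin] new_block])
  also have "card (?C - ?M) = card ?C - card ?M"
    using card_Diff_subset[OF finite_subset[OF M fin] M] .
  finally show ?thesis
    using card_mono[OF fin M] by (simp add: omega_def)
qed

lemma omega_delete_Diff_isolated:
  assumes "simple_graph G" "v \<in> A" "v \<in> verts G" "neighbours G v \<subseteq> A"
  shows "omega (delete G (A - {v})) = Suc (omega (delete G A))"
proof -
  have "touching_components G A v = {}"
    using components_subset assms(4) by (fastforce simp: touching_components_def)
  with omega_delete_Diff_singleton[OF assms(1-3)] show ?thesis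
    by simp
qed

lemma omega_delete_le_Diff_clique:
  assumes G: "simple_graph G" and "v \<in> A" "v \<in> verts G"
    and clique: "\<And>a b. a \<in> neighbours G v - A \<Longrightarrow> b \<in> neighbours G v - A \<Longrightarrow> a \<noteq> b \<Longrightarrow> (a, b) \<in> edges G"
  shows "omega (delete G A) \<le> omega (delete G (A - {v}))"
proof -
  let ?GA = "delete G A" and ?M = "touching_components G A v"
  have GA: "simple_graph ?GA"
    using G by (rule simple_graph_delete)
  have "C = C'" if C: "C \<in> ?M" and C': "C' \<in> ?M" for C C'
  proof -
    obtain a b where a: "a \<in> C" "a \<in> neighbours G v" and b: "b \<in> C'" "b \<in> neighbours G v"
      using C C' by (auto simp: touching_components_def)
    have comps: "C \<in> components ?GA" "C' \<in> components ?GA"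
      using C C' by (simp_all add: touching_components_def)
    have "a \<in> verts ?GA" "b \<in> verts ?GA"
      using a b comps components_subset by blast+
    have "b \<in> C"
    proof (cases "a = b")
      case False
      then have "(a, b) \<in> edges ?GA"
        using clique[of a b] a b \<open>a \<in> verts ?GA\<close> \<open>b \<in> verts ?GA\<close> by simp
      then show ?thesis
        using component_closed[OF GA comps(1) a(1)] by blast
    qed (use a in simp)
    then show "C = C'"
      using components_disjoint[OF GA comps] b(1) by blast
  qed
  moreover have "finite ?M"
    using finite_components[OF GA] by (simp add: touching_components_def)
  ultimately have "card ?M \<le> 1"
    by (simp add: card_le_Suc0_iff_eq)
  then show ?thesis
    using omega_delete_Diff_singleton[OF assms(1-3)] by simp
qed

section \<open>Simplicial vertices\<close>

lemma clique_extends_max_clique: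
  assumes "simple_graph G" "is_clique G C"
  shows "\<exists>D. is_max_clique G D \<and> C \<subseteq> D"
proof -
  let ?S = "{D. is_clique G D \<and> C \<subseteq> D}"
  have "?S \<subseteq> Pow (verts G)"
    by (auto simp: is_clique_def)
  then have fin: "finite ?S"
    by (rule finite_subset) (use assms(1) in \<open>simp add: simple_graph_def\<close>)
  have "C \<in> ?S"
    using assms(2) by simp
  then obtain D where D: "D \<in> ?S" and maximal: "\<And>D'. D' \<in> ?S \<Longrightarrow> D \<subseteq> D' \<Longrightarrow> D = D'"
    using finite_has_maximal2[OF fin] by (metis (no_types, lifting))
  have "is_max_clique G D"
    unfolding is_max_clique_def using D maximal by auto
  with D show ?thesis
    by blast
qed

lemma simplicial_neighbours_adjacent:
  assumes G: "simple_graph G" and "simplicial G v"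
    and "a \<in> neighbours G v" "b \<in> neighbours G v" "a \<noteq> b"
  shows "(a, b) \<in> edges G"
proof -
  have "is_clique G {v, x}" if "x \<in> neighbours G v" for x
    using that G
    by (auto simp: is_clique_def neighbours_def simple_graph_def irrefl_def dest: symD)
  then obtain Ca Cb where Ca: "is_max_clique G Ca" "{v, a} \<subseteq> Ca"
    and Cb: "is_max_clique G Cb" "{v, b} \<subseteq> Cb"
    using clique_extends_max_clique[OF G] assms(3,4) by metis
  have "\<exists>!C. is_max_clique G C \<and> v \<in> C"
    using \<open>simplicial G v\<close> by (simp add: simplicial_def)
  then have "Ca = Cb"
    using Ca Cb by blast
  then show ?thesis
    using Ca Cb \<open>a \<noteq> b\<close> by (simp add: is_max_clique_def is_clique_def)
qed

section \<open>The corona and its copies of \<open>H\<close>\<close>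

lemma verts_hcopy: "verts (hcopy v H) = (\<lambda>w. Inr (v, w)) ` verts H"
  by (simp add: hcopy_def verts_def)

lemma edges_hcopy: "edges (hcopy v H) = (\<lambda>(w, w'). (Inr (v, w), Inr (v, w'))) ` edges H"
  by (simp add: hcopy_def edges_def)

lemma verts_hcopy_iff [simp]:
  "Inl u \<notin> verts (hcopy v H)"
  "Inr (v', w) \<in> verts (hcopy v H) \<longleftrightarrow> v' = v \<and> w \<in> verts H"
  by (auto simp: hcopy_def verts_def)

lemma edges_hcopy_iff [simp]:
  "(Inl u, y) \<notin> edges (hcopy v H)"
  "(y, Inl u) \<notin> edges (hcopy v H)"
  "(Inr (a, b), Inr (c, d)) \<in> edges (hcopy v H) \<longleftrightarrow> a = v \<and> c = v \<and> (b, d) \<in> edges H"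
  by (auto simp: hcopy_def edges_def)

lemma verts_corona_iff [simp]:
  "Inl u \<in> verts (corona G L H) \<longleftrightarrow> u \<in> verts G"
  "Inr (v, w) \<in> verts (corona G L H) \<longleftrightarrow> v \<in> L \<and> w \<in> verts H"
  by (auto simp: corona_def gcopy_def verts_def hcopy_def)

lemma edges_corona_iff [simp]:
  "(Inl u, Inl u') \<in> edges (corona G L H) \<longleftrightarrow> (u, u') \<in> edges G"
  "(Inl u, Inr (v, w)) \<in> edges (corona G L H) \<longleftrightarrow> u = v \<and> v \<in> L \<and> w \<in> verts H"
  "(Inr (v, w), Inl u) \<in> edges (corona G L H) \<longleftrightarrow> u = v \<and> v \<in> L \<and> w \<in> verts H"
  "(Inr (v, w), Inr (v', w')) \<in> edges (corona G L H) \<longleftrightarrow> v' = v \<and> v \<in> L \<and> (w, w') \<in> edges H"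
  by (auto simp: corona_def gcopy_def edges_def verts_def hcopy_def)

lemma simple_graph_hcopy: "simple_graph H \<Longrightarrow> simple_graph (hcopy v H)"
  unfolding simple_graph_def sym_def irrefl_def subset_iff
  by (auto simp: split_sum_all) (auto simp: hcopy_def verts_def)

lemma simple_graph_corona:
  assumes "simple_graph G" "simple_graph H" "L \<subseteq> verts G"
  shows "simple_graph (corona G L H)"
proof -
  have "finite L"
    using assms(1,3) finite_subset by (auto simp: simple_graph_def)
  then have "finite (verts (corona G L H))"
    using assms(1,2) by (auto simp: simple_graph_def corona_def gcopy_def hcopy_def verts_def)
  then show ?thesis
    using assms unfolding simple_graph_def sym_def irrefl_def subset_iff
    by (auto simp: split_sum_all)
qed

lemma components_hcopy:
  assumes H: "simple_graph H"
  shows "components (hcopy v H) = (`) (\<lambda>w. Inr (v, w)) ` components H"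
proof (rule components_eqI)
  show "simple_graph (hcopy v H)"
    using H by (rule simple_graph_hcopy)
  show "\<Union>((`) (\<lambda>w. Inr (v, w)) ` components H) = verts (hcopy v H)"
    using Union_components[of H] by (auto simp: hcopy_def verts_def)
  show "B \<noteq> {}" if "B \<in> (`) (\<lambda>w. Inr (v, w)) ` components H" for B
    using that components_nonempty by blast
  show "\<exists>r. \<forall>y\<in>B. (r, y) \<in> (edges (hcopy v H))\<^sup>*"
    if B_mem: "B \<in> (`) (\<lambda>w. Inr (v, w)) ` components H" for B
  proof -
    obtain C where C: "C \<in> components H" and B: "B = (\<lambda>w. Inr (v, w)) ` C"
      using B_mem by blast
    obtain r where "r \<in> C"
      using components_nonempty[OF C] by blast
    have "(Inr (v, r), Inr (v, w)) \<in> (edges (hcopy v H))\<^sup>*" if "w \<in> C" for w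
      using component_connected[OF H C \<open>r \<in> C\<close> that] by (rule rtrancl_map) simp
    then show ?thesis
      unfolding B by blast
  qed
  show "y \<in> B" if "B \<in> (`) (\<lambda>w. Inr (v, w)) ` components H" "x \<in> B" "(x, y) \<in> edges (hcopy v H)"
    for B x y
    using that component_closed[OF H] by (auto simp: hcopy_def edges_def)
qed

lemma omega_hcopy: "simple_graph H \<Longrightarrow> omega (hcopy v H) = omega H"
  unfolding omega_def components_hcopy
  by (rule card_image) (auto intro: inj_onI simp: inj_image_eq_iff inj_def)

section \<open>Deleting a vertex set from a corona\<close>

definition base_part :: "'a graph \<Rightarrow> ('a + 'a \<times> 'b) set \<Rightarrow> 'a set" where
  "base_part G S = {u \<in> verts G. Inl u \<in> S}"

lemma finite_base_part: "simple_graph G \<Longrightarrow> finite (base_part G S)"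
  by (simp add: base_part_def simple_graph_def)

definition fibre :: "'b graph \<Rightarrow> ('a + 'a \<times> 'b) set \<Rightarrow> 'a \<Rightarrow> ('a + 'a \<times> 'b) set" where
  "fibre H S v = S \<inter> verts (hcopy v H)"

locale corona_deletion =
  fixes G :: "'a graph" and L :: "'a set" and H :: "'b graph" and S :: "('a + 'a \<times> 'b) set"
  assumes simple_G: "simple_graph G" and simple_H: "simple_graph H" and L_subset: "L \<subseteq> verts G"
begin

abbreviation "residual \<equiv> delete (corona G L H) S"
abbreviation "base_residual \<equiv> delete G (base_part G S)"
abbreviation "fibre_residual v \<equiv> delete (hcopy v H) (fibre H S v)"

definition pendant_block :: "'a set \<Rightarrow> ('a + 'a \<times> 'b) set" where
  "pendant_block C = Inl ` C \<union> {Inr (v, w) | v w. v \<in> C \<inter> L \<and> w \<in> verts H \<and> Inr (v, w) \<notin> S}"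

definition residual_blocks :: "('a + 'a \<times> 'b) set set" where
  "residual_blocks =
    pendant_block ` components base_residual
      \<union> (\<Union>v\<in>L \<inter> base_part G S. components (fibre_residual v))"

lemma simple_residual: "simple_graph residual"
  by (intro simple_graph_delete simple_graph_corona simple_G simple_H L_subset)

lemma simple_base_residual: "simple_graph base_residual"
  by (intro simple_graph_delete simple_G)

lemma simple_fibre_residual: "simple_graph (fibre_residual v)"
  by (intro simple_graph_delete simple_graph_hcopy simple_H)

lemma verts_base_residual_iff: "u \<in> verts base_residual \<longleftrightarrow> u \<in> verts G \<and> Inl u \<notin> S"
  by (auto simp: base_part_def)

lemma verts_hcopy_Diff_fibre:
  "verts (hcopy v H) - fibre H S v = {Inr (v, w) | w. w \<in> verts H \<and> Inr (v, w) \<notin> S}"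
  by (auto simp: fibre_def verts_hcopy)

lemma edges_fibre_residual_subset: "v \<in> L \<Longrightarrow> edges (fibre_residual v) \<subseteq> edges residual"
  using simple_graph_edgeD[OF simple_H] by (auto simp: fibre_def edges_hcopy)

lemma pendant_block_subset:
  assumes "C \<in> components base_residual"
  shows "pendant_block C \<subseteq> verts residual"
  using components_subset[OF assms] L_subset by (auto simp: pendant_block_def base_part_def)

lemma fibre_residual_subset: "v \<in> L \<Longrightarrow> verts (fibre_residual v) \<subseteq> verts residual"
  by (auto simp: verts_hcopy_Diff_fibre)

lemma Union_residual_blocks: "\<Union>residual_blocks = verts residual"
proof
  show "\<Union>residual_blocks \<subseteq> verts residual"
    using pendant_block_subset fibre_residual_subset components_subset
    unfolding residual_blocks_def by blast
  show "verts residual \<subseteq> \<Union>residual_blocks"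
  proof
    fix x assume x: "x \<in> verts residual"
    show "x \<in> \<Union>residual_blocks"
    proof (cases x)
      case (Inl u)
      then obtain C where "C \<in> components base_residual" "u \<in> C"
        using x Union_components[of base_residual] verts_base_residual_iff by auto
      then show ?thesis
        using Inl by (auto simp: residual_blocks_def pendant_block_def)
    next
      case (Inr p)
      then obtain v w where p: "x = Inr (v, w)" "v \<in> L" "w \<in> verts H" "Inr (v, w) \<notin> S"
        using x by (cases p) auto
      show ?thesis
      proof (cases "v \<in> base_part G S")
        case True
        then obtain B where "B \<in> components (fibre_residual v)" "x \<in> B"
          using p Union_components[of "fibre_residual v"] by (auto simp: verts_hcopy_Diff_fibre)
        then show ?thesis
          using True p(2) by (auto simp: residual_blocks_def)
      next
        case False
        then obtain C where "C \<in> components base_residual" "v \<in> C"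
          using p L_subset Union_components[of base_residual] by (auto simp: base_part_def)
        then show ?thesis
          using p by (auto simp: residual_blocks_def pendant_block_def)
      qed
    qed
  qed
qed

lemma residual_blocks_nonempty: "B \<in> residual_blocks \<Longrightarrow> B \<noteq> {}"
  by (auto simp: residual_blocks_def pendant_block_def dest: components_nonempty)

lemma pendant_block_rooted:
  assumes "C \<in> components base_residual"
  shows "\<exists>r. \<forall>y\<in>pendant_block C. (r, y) \<in> (edges residual)\<^sup>*"
proof -
  obtain r where "r \<in> C"
    using components_nonempty[OF assms] by blast
  have Inl_reach: "(Inl r, Inl u) \<in> (edges residual)\<^sup>*" if "u \<in> C" for u
    using component_connected[OF simple_base_residual assms \<open>r \<in> C\<close> that]
    by (rule rtrancl_map) (auto simp: base_part_def)
  have "(Inl r, Inr (v, w)) \<in> (edges residual)\<^sup>*"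
    if "v \<in> C" "v \<in> L" "w \<in> verts H" "Inr (v, w) \<notin> S" for v w
  proof -
    have "(Inl v, Inr (v, w)) \<in> edges residual"
      using that components_subset[OF assms] by (auto simp: base_part_def)
    with Inl_reach[OF \<open>v \<in> C\<close>] show ?thesis
      by (rule rtrancl_into_rtrancl)
  qed
  then show ?thesis
    using Inl_reach by (auto simp: pendant_block_def)
qed

lemma pendant_block_closed:
  assumes "C \<in> components base_residual" "x \<in> pendant_block C" "(x, y) \<in> edges residual"
  shows "y \<in> pendant_block C"
proof -
  have closed: "u' \<in> C" if "u \<in> C" "(u, u') \<in> edges G" "u' \<in> verts G" "Inl u' \<notin> S" for u u'
    using component_closed[OF simple_base_residual assms(1) that(1)]
      components_subset[OF assms(1)] that
    by (auto simp: base_part_def)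
  have "y \<in> verts residual"
    using assms(3) by auto
  then show ?thesis
    using assms(2,3) closed simple_graph_edgeD[OF simple_G]
    by (cases y) (auto simp: pendant_block_def)
qed

lemma fibre_component_closed:
  assumes "v \<in> base_part G S" "B \<in> components (fibre_residual v)" "x \<in> B" "(x, y) \<in> edges residual"
  shows "y \<in> B"
proof -
  obtain w where x: "x = Inr (v, w)"
    using components_subset[OF assms(2)] assms(3) by (auto simp: verts_hcopy_Diff_fibre)
  have "(x, y) \<in> edges (fibre_residual v)"
    using assms(1,4) components_subset[OF assms(2)] assms(3) x
    by (cases y) (auto simp: base_part_def fibre_def)
  then show ?thesis
    using component_closed[OF simple_fibre_residual assms(2,3)] by blast
qed

lemma components_residual: "components residual = residual_blocks"
proof (rule components_eqI[OF simple_residual Union_residual_blocks residual_blocks_nonempty])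
  fix B assume "B \<in> residual_blocks"
  then consider C where "C \<in> components base_residual" "B = pendant_block C"
    | v where "v \<in> L" "B \<in> components (fibre_residual v)"
    unfolding residual_blocks_def by blast
  then show "\<exists>r. \<forall>y\<in>B. (r, y) \<in> (edges residual)\<^sup>*"
  proof cases
    case 1
    then show ?thesis
      using pendant_block_rooted by blast
  next
    case 2
    then obtain r where "r \<in> B"
      using components_nonempty by blast
    then have "\<forall>y\<in>B. (r, y) \<in> (edges (fibre_residual v))\<^sup>*"
      using component_connected[OF simple_fibre_residual 2(2)] by blast
    then show ?thesis
      using rtrancl_mono[OF edges_fibre_residual_subset[OF 2(1)]] by blast
  qed
next
  show "y \<in> B" if "B \<in> residual_blocks" "x \<in> B" "(x, y) \<in> edges residual" for B x y
    using that pendant_block_closed fibre_component_closed by (auto simp: residual_blocks_def)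
qed

lemma fibre_component_subset: "B \<in> components (fibre_residual v) \<Longrightarrow> B \<subseteq> verts (hcopy v H)"
  using components_subset by fastforce

lemma inj_on_pendant_block: "inj_on pendant_block (components base_residual)"
  by (rule inj_onI) (auto simp: pendant_block_def dest: arg_cong[of _ _ "\<lambda>B. {u. Inl u \<in> B}"])

lemma card_fibre_blocks:
  "card (\<Union>v\<in>L \<inter> base_part G S. components (fibre_residual v))
    = (\<Sum>v\<in>L \<inter> base_part G S. omega (fibre_residual v))"
  unfolding omega_def
proof (rule card_UN_disjoint)
  show "finite (L \<inter> base_part G S)"
    using finite_base_part[OF simple_G] by blast
  show "\<forall>v\<in>L \<inter> base_part G S. finite (components (fibre_residual v))"
    using finite_components[OF simple_fibre_residual] by blast
  show "\<forall>v\<in>L \<inter> base_part G S. \<forall>v'\<in>L \<inter> base_part G S.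
    v \<noteq> v' \<longrightarrow> components (fibre_residual v) \<inter> components (fibre_residual v') = {}"
  proof (intro ballI impI)
    fix v v' :: 'a assume "v \<noteq> v'"
    then have disjoint: "verts (hcopy v H) \<inter> verts (hcopy v' H) = {}"
      by (auto simp: verts_hcopy)
    have "B = {}" if "B \<in> components (fibre_residual v)" "B \<in> components (fibre_residual v')" for B
      using fibre_component_subset[OF that(1)] fibre_component_subset[OF that(2)] disjoint by blast
    then show "components (fibre_residual v) \<inter> components (fibre_residual v') = {}"
      using components_nonempty by blast
  qed
qed

lemma pendant_blocks_disjoint_fibre_blocks:
  "pendant_block ` components base_residual
    \<inter> (\<Union>v\<in>L \<inter> base_part G S. components (fibre_residual v)) = {}"
proof -
  have "Inl u \<notin> B" if "B \<in> components (fibre_residual v)" for B u v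
    using fibre_component_subset[OF that] by auto
  moreover have "\<exists>u. Inl u \<in> pendant_block C" if C: "C \<in> components base_residual" for C
  proof -
    obtain u where "u \<in> C"
      using components_nonempty[OF C] by blast
    then show ?thesis
      by (auto simp: pendant_block_def)
  qed
  ultimately show ?thesis
    by blast
qed

lemma omega_residual:
  "omega residual = omega base_residual + (\<Sum>v\<in>L \<inter> base_part G S. omega (fibre_residual v))"
proof -
  have "finite (\<Union>v\<in>L \<inter> base_part G S. components (fibre_residual v))"
    using finite_base_part[OF simple_G] finite_components[OF simple_fibre_residual] by blast
  then have "card residual_blocks = card (pendant_block ` components base_residual)
    + card (\<Union>v\<in>L \<inter> base_part G S. components (fibre_residual v))"
    unfolding residual_blocks_def using finite_components[OF simple_base_residual]
    by (intro card_Un_disjoint finite_imageI pendant_blocks_disjoint_fibre_blocks)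
  then show ?thesis
    unfolding omega_def[of residual] components_residual card_fibre_blocks
    by (simp add: card_image[OF inj_on_pendant_block] omega_def)
qed

end

lemma omega_delete_corona:
  assumes "simple_graph G" "simple_graph H" "L \<subseteq> verts G"
  shows "omega (delete (corona G L H) S) = omega (delete G (base_part G S))
    + (\<Sum>v\<in>L \<inter> base_part G S. omega (delete (hcopy v H) (fibre H S v)))"
  using assms by (rule corona_deletion.omega_residual[OF corona_deletion.intro])

section \<open>Cutsets of a corona\<close>

lemma base_part_Diff_Inl [simp]: "base_part G (S - {Inl u}) = base_part G S - {u}"
  by (auto simp: base_part_def)

lemma base_part_Diff_Inr [simp]: "base_part G (S - {Inr p}) = base_part G S"
  by (auto simp: base_part_def)

lemma fibre_Diff [simp]: "fibre H (S - {x}) v = fibre H S v - {x}"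
  by (auto simp: fibre_def)

lemma fibre_Diff_Inl [simp]: "fibre H S v - {Inl u} = fibre H S v"
  by (auto simp: fibre_def)

lemma fibre_Diff_Inr_other: "v' \<noteq> v \<Longrightarrow> fibre H S v - {Inr (v', w)} = fibre H S v"
  by (auto simp: fibre_def)

locale corona_cutset =
  fixes G :: "'a graph" and L :: "'a set" and H :: "'b graph" and T :: "('a + 'a \<times> 'b) set"
  assumes simple_G: "simple_graph G" and simple_H: "simple_graph H"
    and connected_H: "connected_graph H" and L_psubset: "L \<subset> verts G"
    and cutset: "is_cutset (corona G L H) T"
begin

abbreviation "fibre_omega S v \<equiv> omega (delete (hcopy v H) (fibre H S v))"

lemma L_subset: "L \<subseteq> verts G"
  using L_psubset by blast

lemmas omega_delete_corona_split = omega_delete_corona[OF simple_G simple_H L_subset]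

lemma cutset_omega_less:
  "x \<in> T \<Longrightarrow> omega (delete (corona G L H) (T - {x})) < omega (delete (corona G L H) T)"
  using cutset by (auto simp: is_cutset_def)

lemma Inl_mem_cutset_iff: "Inl u \<in> T \<longleftrightarrow> u \<in> base_part G T"
  using cutset by (auto simp: is_cutset_def base_part_def)

lemma Inr_mem_cutset_L: "Inr (v, w) \<in> T \<Longrightarrow> v \<in> L"
  using cutset by (auto simp: is_cutset_def)

lemma omega_fibre_empty: "fibre H T v = {} \<Longrightarrow> fibre_omega T v = 1"
  using simple_H connected_H
  by (simp add: delete_empty simple_graph_hcopy omega_hcopy connected_graph_def)

lemma cutset_Inl_omega_less:
  assumes "u \<in> base_part G T"
  shows "omega (delete G (base_part G T - {u}))
    < omega (delete G (base_part G T)) + (if u \<in> L then fibre_omega T u else 0)"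
proof -
  from cutset_omega_less[of "Inl u"] assms
  have "omega (delete G (base_part G T - {u})) + (\<Sum>v\<in>L \<inter> (base_part G T - {u}). fibre_omega T v)
    < omega (delete G (base_part G T)) + (\<Sum>v\<in>L \<inter> base_part G T. fibre_omega T v)"
    unfolding omega_delete_corona_split by (simp add: Inl_mem_cutset_iff)
  moreover have "(\<Sum>v\<in>L \<inter> base_part G T. fibre_omega T v)
    = (if u \<in> L then fibre_omega T u else 0) + (\<Sum>v\<in>L \<inter> (base_part G T - {u}). fibre_omega T v)"
    using assms finite_base_part[OF simple_G] sum.remove[of "L \<inter> base_part G T" u "fibre_omega T"]
    by (auto simp: Int_Diff intro: sum.cong)
  ultimately show ?thesis
    by simp
qed

lemma cutset_Inr_sum_less:
  assumes "Inr (v, w) \<in> T"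
  shows "(\<Sum>v'\<in>L \<inter> base_part G T. fibre_omega (T - {Inr (v, w)}) v')
    < (\<Sum>v'\<in>L \<inter> base_part G T. fibre_omega T v')"
  using cutset_omega_less[OF assms] unfolding omega_delete_corona_split by simp

lemma cutset_Inr_base_part:
  assumes "Inr (v, w) \<in> T"
  shows "v \<in> base_part G T"
proof (rule ccontr)
  assume "v \<notin> base_part G T"
  then have "(\<Sum>v'\<in>L \<inter> base_part G T. fibre_omega (T - {Inr (v, w)}) v')
    = (\<Sum>v'\<in>L \<inter> base_part G T. fibre_omega T v')"
    by (intro sum.cong refl) (metis IntE fibre_Diff fibre_Diff_Inr_other)
  with cutset_Inr_sum_less[OF assms] show False
    by simp
qed

lemma cutset_Inr_omega_less:
  assumes "Inr (v, w) \<in> T"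
  shows "omega (delete (hcopy v H) (fibre H T v - {Inr (v, w)})) < fibre_omega T v"
proof -
  let ?I = "L \<inter> base_part G T"
  have "v \<in> ?I"
    using assms Inr_mem_cutset_L cutset_Inr_base_part by blast
  have fin: "finite ?I"
    using finite_base_part[OF simple_G] by blast
  have "(\<Sum>v'\<in>?I - {v}. fibre_omega (T - {Inr (v, w)}) v') = (\<Sum>v'\<in>?I - {v}. fibre_omega T v')"
    by (intro sum.cong refl) (metis DiffE singletonI fibre_Diff fibre_Diff_Inr_other)
  with cutset_Inr_sum_less[OF assms] show ?thesis
    using sum.remove[OF fin \<open>v \<in> ?I\<close>, of "fibre_omega (T - {Inr (v, w)})"]
      sum.remove[OF fin \<open>v \<in> ?I\<close>, of "fibre_omega T"]
    by simp
qed

lemma base_part_nonempty: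
  assumes "T \<noteq> {}"
  shows "base_part G T \<noteq> {}"
proof -
  obtain x where "x \<in> T"
    using assms by blast
  then show ?thesis
    using Inl_mem_cutset_iff cutset_Inr_base_part by (cases x) auto
qed

lemma base_part_psubset: "base_part G T \<subset> verts G"
proof -
  obtain u where "u \<in> verts G" "u \<notin> L"
    using L_psubset by blast
  then have "base_part G T \<noteq> verts G"
    using cutset_Inl_omega_less[of u] omega_delete_verts[of G] by auto
  then show ?thesis
    by (auto simp: base_part_def)
qed

lemma fibre_eq_empty: "v \<notin> base_part G T \<Longrightarrow> fibre H T v = {}"
  using cutset_Inr_base_part by (auto simp: fibre_def verts_hcopy)

lemma fibre_cutset: "is_cutset (hcopy v H) (fibre H T v)"
  using cutset_Inr_omega_less by (auto simp: is_cutset_def fibre_def verts_hcopy)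

lemma fibre_nonempty:
  assumes "v \<in> L \<inter> base_part G T" "neighbours G v \<subseteq> base_part G T"
  shows "fibre H T v \<noteq> {}"
proof
  assume "fibre H T v = {}"
  moreover have "omega (delete G (base_part G T - {v})) = Suc (omega (delete G (base_part G T)))"
    using assms omega_delete_Diff_isolated[OF simple_G] by (auto simp: base_part_def)
  ultimately show False
    using cutset_Inl_omega_less[of v] assms(1) omega_fibre_empty by simp
qed

lemma simplicial_base_part_in_L:
  assumes "v \<in> base_part G T" "simplicial G v"
  shows "v \<in> L"
proof (rule ccontr)
  assume "v \<notin> L"
  have "omega (delete G (base_part G T)) \<le> omega (delete G (base_part G T - {v}))"
    using assms simplicial_neighbours_adjacent[OF simple_G assms(2)]
    by (intro omega_delete_le_Diff_clique[OF simple_G]) (auto simp: base_part_def)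
  with cutset_Inl_omega_less[OF assms(1)] \<open>v \<notin> L\<close> show False
    by simp
qed

lemma omega_delete_corona_cutset:
  defines "N \<equiv> {v \<in> L. fibre H T v \<noteq> {}}"
  shows "int (omega (delete (corona G L H) T)) = int (omega (delete G (base_part G T)))
    + (\<Sum>v\<in>N. int (fibre_omega T v)) + int (card (base_part G T \<inter> L)) - int (card N)"
proof -
  let ?I = "L \<inter> base_part G T"
  have N: "N \<subseteq> ?I" and fin: "finite ?I"
    using fibre_eq_empty finite_base_part[OF simple_G] by (auto simp: N_def)
  then have "(\<Sum>v\<in>?I. fibre_omega T v) = (\<Sum>v\<in>N. fibre_omega T v) + (\<Sum>v\<in>?I - N. fibre_omega T v)"
    by (simp add: sum.subset_diff)
  also have "(\<Sum>v\<in>?I - N. fibre_omega T v) = card (?I - N)"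
    using omega_fibre_empty by (auto simp: N_def)
  finally have sum_split: "(\<Sum>v\<in>?I. fibre_omega T v) = (\<Sum>v\<in>N. fibre_omega T v) + card (?I - N)" .
  have "int (card (?I - N)) = int (card ?I) - int (card N)"
    using card_Diff_subset[OF finite_subset[OF N fin] N] card_mono[OF fin N] by simp
  then show ?thesis
    unfolding omega_delete_corona_split[of T] sum_split by (simp add: Int_commute)
qed

lemma cutset_eq_Inl_base_part:
  assumes "base_part G T \<inter> L = {}"
  shows "T = Inl ` base_part G T"
proof -
  have "x \<in> Inl ` base_part G T" if "x \<in> T" for x
  proof (cases x)
    case (Inl u)
    then show ?thesis
      using that Inl_mem_cutset_iff by blast
  next
    case (Inr p)
    with that assms show ?thesis
      using Inr_mem_cutset_L cutset_Inr_base_part by (cases p) blast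
  qed
  then show ?thesis
    using Inl_mem_cutset_iff by blast
qed

lemma base_part_cutset:
  assumes "base_part G T \<inter> L = {}"
  shows "is_cutset G (base_part G T)"
proof -
  have "omega (delete G (base_part G T - {u})) < omega (delete G (base_part G T))"
    if "u \<in> base_part G T" for u
  proof -
    have "u \<notin> L"
      using that assms by blast
    with cutset_Inl_omega_less[OF that] show ?thesis
      by simp
  qed
  then show ?thesis
    by (auto simp: is_cutset_def base_part_def)
qed

end

theorem proposition3p1:
  fixes G :: "'a graph" and H :: "'b graph" and L :: "'a set"
    and T :: "('a + 'a \<times> 'b) set"
  assumes "simple_graph G" and "simple_graph H"
    and "connected_graph G" and "connected_graph H"
    and "L \<noteq> {}" and "L \<subset> verts G"
    and "T \<noteq> {}" and "is_cutset (corona G L H) T"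
  defines "T0 \<equiv> {u \<in> verts G. Inl u \<in> T}"
    and "Tv \<equiv> (\<lambda>v. T \<inter> verts (hcopy v H))"
    and "N \<equiv> {v \<in> L. T \<inter> verts (hcopy v H) \<noteq> {}}"
  shows "({} \<noteq> T0 \<and> T0 \<subset> verts G)
    \<and> (\<forall>v \<in> L - T0. Tv v = {})
    \<and> (\<forall>v \<in> L \<inter> T0. Tv v = {} \<or> is_cutset (hcopy v H) (Tv v))
    \<and> (\<forall>v \<in> L \<inter> T0. neighbours G v \<subseteq> T0 \<longrightarrow> Tv v \<noteq> {})
    \<and> int (omega (delete (corona G L H) T)) =
        int (omega (delete G T0)) + (\<Sum>v\<in>N. int (omega (delete (hcopy v H) (Tv v))))
        + int (card (T0 \<inter> L)) - int (card N)
    \<and> (\<forall>v \<in> T0. simplicial G v \<longrightarrow> v \<in> L)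
    \<and> (T0 \<inter> L = {} \<longrightarrow>
         T = Inl ` T0 \<and> is_cutset G T0 \<and> (\<forall>v \<in> T0. \<not> simplicial G v))"
proof -
  interpret corona_cutset G L H T
    using assms by unfold_locales auto
  have "T0 = base_part G T" "Tv = fibre H T" "N = {v \<in> L. fibre H T v \<noteq> {}}"
    by (auto simp: T0_def Tv_def N_def base_part_def fibre_def)
  then show ?thesis
    using base_part_nonempty[OF \<open>T \<noteq> {}\<close>] base_part_psubset fibre_eq_empty fibre_cutset
      fibre_nonempty omega_delete_corona_cutset simplicial_base_part_in_L
      cutset_eq_Inl_base_part base_part_cutset
    by auto
qed

end
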